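(* Let $m$ be a prime and let $k<n$ be positive integers. Let $\mathcal{C}\subseteq\mathbb{F}_{q^m}^n$ be an $[n,k]$ linear code with systematic generator matrix $[I_k\,|\,A]$, $A\in\mathcal{M}_{k,n-k}(\mathbb{F}_{q^m})$, and let $\mathcal{S}$ be the set of entries of $A$. If some $\alpha\in\mathcal{S}$ satisfies $\alpha\notin\mathbb{F}_q$, then every $\mathbb{F}_q$-linear automorphism $\varphi$ of $\mathbb{F}_{q^m}$ that is linear on $\mathcal{C}$ is fully linear over $\mathbb{F}_{q^m}$.
   Context: $q$ is a prime power (the paper takes $q$ a power of $2$). $I_k$ is the $k\times k$ identity matrix. An $\mathbb{F}_q$-linear automorphism of $\mathbb{F}_{q^m}$ is a bijective $\mathbb{F}_q$-linear map $\varphi:\mathbb{F}_{q^m}\to\mathbb{F}_{q^m}$, applied componentwise to vectors, with $\varphi(\mathcal{V})=\{\varphi(\bm{v}):\bm{v}\in\mathcal{V}\}$. $\varphi$ is linear on an $\mathbb{F}_{q^m}$-linear code $\mathcal{C}$ if $\varphi(\mathcal{C})$ is an $\mathbb{F}_{q^m}$-linear subspace; $\varphi$ is fully linear over $\mathbb{F}_{q^m}$ if it is linear on every $\mathbb{F}_{q^m}$-linear code of every length. *)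

theory Defs
  imports Main "HOL-Computational_Algebra.Primes"
begin

text \<open>K is a subfield of the (finite) field 'a; it plays the role of F_q inside F_{q^m}.\<close>
definition is_subfield :: "'a::field set \<Rightarrow> bool" where
  "is_subfield K \<longleftrightarrow> 0 \<in> K \<and> 1 \<in> K \<and>
     (\<forall>x\<in>K. \<forall>y\<in>K. x + y \<in> K \<and> x * y \<in> K) \<and>
     (\<forall>x\<in>K. - x \<in> K) \<and> (\<forall>x\<in>K. x \<noteq> 0 \<longrightarrow> inverse x \<in> K)"

definition is_linear_code :: "nat \<Rightarrow> 'a::field list set \<Rightarrow> bool" where
  "is_linear_code n C \<longleftrightarrow> C \<subseteq> {v. length v = n} \<and> replicate n 0 \<in> C \<and>
     (\<forall>u\<in>C. \<forall>v\<in>C. map2 (+) u v \<in> C) \<and>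
     (\<forall>c. \<forall>v\<in>C. map ((*) c) v \<in> C)"

definition Fq_linear_aut :: "'a::field set \<Rightarrow> ('a \<Rightarrow> 'a) \<Rightarrow> bool" where
  "Fq_linear_aut K \<phi> \<longleftrightarrow> bij \<phi> \<and> (\<forall>x y. \<phi> (x + y) = \<phi> x + \<phi> y) \<and>
     (\<forall>c\<in>K. \<forall>x. \<phi> (c * x) = c * \<phi> x)"

definition code_image :: "('a \<Rightarrow> 'a) \<Rightarrow> 'a list set \<Rightarrow> 'a list set" where
  "code_image \<phi> C = map \<phi> ` C"

definition linear_on :: "('a::field \<Rightarrow> 'a) \<Rightarrow> nat \<Rightarrow> 'a list set \<Rightarrow> bool" where
  "linear_on \<phi> n C \<longleftrightarrow> is_linear_code n (code_image \<phi> C)"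

definition fully_linear :: "('a::field \<Rightarrow> 'a) \<Rightarrow> bool" where
  "fully_linear \<phi> \<longleftrightarrow> (\<forall>n C. is_linear_code n C \<longrightarrow> linear_on \<phi> n C)"

text \<open>Systematic generator matrix [I_k | A]; A is given by its entries A i j, i<k, j<n-k.\<close>
definition sys_gen_entry :: "nat \<Rightarrow> (nat \<Rightarrow> nat \<Rightarrow> 'a::field) \<Rightarrow> nat \<Rightarrow> nat \<Rightarrow> 'a" where
  "sys_gen_entry k A i j = (if j < k then (if i = j then 1 else 0) else A i (j - k))"

definition sys_code :: "nat \<Rightarrow> nat \<Rightarrow> (nat \<Rightarrow> nat \<Rightarrow> 'a::field) \<Rightarrow> 'a list set" where
  "sys_code n k A = {map (\<lambda>j. \<Sum>i<k. u i * sys_gen_entry k A i j) [0..<n] | u. True}"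

definition entry_set :: "nat \<Rightarrow> nat \<Rightarrow> (nat \<Rightarrow> nat \<Rightarrow> 'a) \<Rightarrow> 'a set" where
  "entry_set n k A = {A i j | i j. i < k \<and> j < n - k}"

end

theory Submission
  imports Defs "HOL.Modules"
begin

text \<open>
  Fix a scalar c and let \<psi> x be the preimage of c \<cdot> \<phi> x under \<phi>. Linearity of \<phi> on
  the code, applied to the scaled image of the i-th row of [I_k | A], shows that \<psi> commutes
  with multiplication by every entry A i j. The scalars commuting with \<psi> form a subfield
  lying between F_q and F_{q^m}; it contains some A i j \<notin> F_q, and m is prime, so it is all
  of F_{q^m}. Hence \<psi> is multiplication by \<psi> 1, i.e. \<phi> (\<psi> 1 \<cdot> x) = c \<cdot> \<phi> x for all x,
  and an additive map with this property maps every linear code to a linear code.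
\<close>

lemma
  assumes "is_subfield L"
  shows subfield_zero: "0 \<in> L" and subfield_one: "1 \<in> L"
    and subfield_add: "x \<in> L \<Longrightarrow> y \<in> L \<Longrightarrow> x + y \<in> L"
    and subfield_mult: "x \<in> L \<Longrightarrow> y \<in> L \<Longrightarrow> x * y \<in> L"
    and subfield_uminus: "x \<in> L \<Longrightarrow> - x \<in> L"
    and subfield_inverse: "x \<in> L \<Longrightarrow> inverse x \<in> L"
  using assms unfolding is_subfield_def by auto

lemma subfield_diff: "is_subfield L \<Longrightarrow> x \<in> L \<Longrightarrow> y \<in> L \<Longrightarrow> x - y \<in> L"
  using subfield_add subfield_uminus by (metis diff_conv_add_uminus)

subsection \<open>Cardinality of subspaces over a subfield\<close>

definition is_subspace_over :: "'a::field set \<Rightarrow> 'a set \<Rightarrow> bool" where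
  "is_subspace_over L N \<longleftrightarrow> 0 \<in> N \<and> (\<forall>x\<in>N. \<forall>y\<in>N. x + y \<in> N) \<and> (\<forall>l\<in>L. \<forall>x\<in>N. l * x \<in> N)"

lemma subspace_over_diff:
  assumes "is_subfield L" "is_subspace_over L N" "x \<in> N" "y \<in> N"
  shows "x - y \<in> N"
proof -
  have "(- 1) * y \<in> N"
    using assms subfield_one subfield_uminus unfolding is_subspace_over_def by blast
  then show ?thesis
    using assms unfolding is_subspace_over_def by (metis diff_conv_add_uminus mult_minus1)
qed

lemma subspace_over_subfield: "is_subfield L \<Longrightarrow> K \<subseteq> L \<Longrightarrow> is_subspace_over K L"
  unfolding is_subspace_over_def by (auto intro: subfield_zero subfield_add subfield_mult)

definition extend_subspace :: "'a::field set \<Rightarrow> 'a set \<Rightarrow> 'a \<Rightarrow> 'a set" where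
  "extend_subspace L N x = (\<lambda>(a, l). a + l * x) ` (N \<times> L)"

lemma inj_on_extend_subspace:
  assumes L: "is_subfield L" and N: "is_subspace_over L N" and x: "x \<notin> N"
  shows "inj_on (\<lambda>(a, l). a + l * x) (N \<times> L)"
proof (rule inj_onI, clarsimp)
  fix a l b l'
  assume mem: "a \<in> N" "l \<in> L" "b \<in> N" "l' \<in> L" and eq: "a + l * x = b + l' * x"
  show "a = b \<and> l = l'"
  proof (cases "l = l'")
    case True
    then show ?thesis using eq by simp
  next
    case False
    then have "x = inverse (l - l') * (b - a)"
      using eq by (simp add: field_simps)
    moreover have "inverse (l - l') \<in> L"
      using L mem by (simp add: subfield_diff subfield_inverse)
    ultimately have "x \<in> N"
      using N mem subspace_over_diff[OF L N] unfolding is_subspace_over_def by simp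
    with x show ?thesis by contradiction
  qed
qed

lemma card_extend_subspace:
  "is_subfield L \<Longrightarrow> is_subspace_over L N \<Longrightarrow> x \<notin> N \<Longrightarrow>
    card (extend_subspace L N x) = card N * card L"
  unfolding extend_subspace_def
  by (simp add: card_image inj_on_extend_subspace card_cartesian_product)

lemma subspace_over_extend_subspace:
  assumes L: "is_subfield L" and N: "is_subspace_over L N"
  shows "is_subspace_over L (extend_subspace L N x)"
  unfolding is_subspace_over_def
proof (intro conjI ballI)
  show "0 \<in> extend_subspace L N x"
    using N subfield_zero[OF L] unfolding extend_subspace_def is_subspace_over_def
    by (force intro: image_eqI[where x = "(0, 0)"])
next
  fix y z assume "y \<in> extend_subspace L N x" "z \<in> extend_subspace L N x"
  then obtain a l b l' where "a \<in> N" "l \<in> L" "b \<in> N" "l' \<in> L" "y = a + l * x" "z = b + l' * x"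
    unfolding extend_subspace_def by auto
  moreover have "y + z = (a + b) + (l + l') * x"
    using calculation by (simp add: algebra_simps)
  ultimately show "y + z \<in> extend_subspace L N x"
    using N subfield_add[OF L] unfolding extend_subspace_def is_subspace_over_def
    by (auto intro!: image_eqI[where x = "(a + b, l + l')"])
next
  fix c y assume "c \<in> L" "y \<in> extend_subspace L N x"
  then obtain a l where "a \<in> N" "l \<in> L" "y = a + l * x"
    unfolding extend_subspace_def by auto
  moreover have "c * y = c * a + (c * l) * x"
    using calculation by (simp add: algebra_simps)
  ultimately show "c * y \<in> extend_subspace L N x"
    using N subfield_mult[OF L] \<open>c \<in> L\<close> unfolding extend_subspace_def is_subspace_over_def
    by (auto intro!: image_eqI[where x = "(c * a, c * l)"])
qed

lemma insert_subset_extend_subspace: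
  "is_subfield L \<Longrightarrow> is_subspace_over L N \<Longrightarrow> insert x N \<subseteq> extend_subspace L N x"
  unfolding extend_subspace_def is_subspace_over_def
  by (force intro: image_eqI[where x = "(0, 1)"] image_eqI[where x = "(_, 0)"]
      subfield_zero subfield_one)

lemma extend_subspace_subset:
  "is_subspace_over L N \<Longrightarrow> is_subspace_over L M \<Longrightarrow> N \<subseteq> M \<Longrightarrow> x \<in> M \<Longrightarrow>
    extend_subspace L N x \<subseteq> M"
  unfolding extend_subspace_def is_subspace_over_def by (auto simp: subset_iff)

lemma card_subspace_over_power_mono:
  assumes L: "is_subfield L" and M: "is_subspace_over L M" "finite M"
    and N: "is_subspace_over L N" "N \<subseteq> M" and card_N: "card N = card L ^ s"
  shows "\<exists>t. card M = card L ^ t"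
  using N card_N
proof (induction "card M - card N" arbitrary: N s rule: less_induct)
  case less
  show ?case
  proof (cases "N = M")
    case True
    then show ?thesis using less.prems by blast
  next
    case False
    then obtain x where x: "x \<in> M" "x \<notin> N" using less.prems by blast
    define N' where "N' = extend_subspace L N x"
    have N': "is_subspace_over L N'" "N' \<subseteq> M"
      using subspace_over_extend_subspace[OF L less.prems(1)]
        extend_subspace_subset[OF less.prems(1) M(1) less.prems(2) x(1)]
      unfolding N'_def by auto
    have "N \<subset> N'"
      using insert_subset_extend_subspace[OF L less.prems(1), of x] x(2) unfolding N'_def by blast
    then have "card N < card N'"
      using N'(2) M(2) by (meson finite_subset psubset_card_mono)
    moreover have "card N' \<le> card M" using N' M(2) by (simp add: card_mono)
    moreover have "card N' = card L ^ Suc s"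
      using card_extend_subspace[OF L less.prems(1) x(2)] less.prems(3) unfolding N'_def by simp
    ultimately show ?thesis using less.hyps N' by (metis diff_less_mono2 order_less_le_trans)
  qed
qed

lemma card_subspace_over_power:
  "is_subfield L \<Longrightarrow> is_subspace_over L M \<Longrightarrow> finite M \<Longrightarrow> \<exists>t. card M = card L ^ t"
  by (rule card_subspace_over_power_mono[where N = "{0}" and s = 0])
    (auto simp: is_subspace_over_def)

lemma intermediate_subfield_prime_degree:
  fixes K L :: "'a::{field,finite} set"
  assumes K: "is_subfield K" and L: "is_subfield L" and "K \<subseteq> L"
    and card_UNIV: "card (UNIV :: 'a set) = card K ^ m" and "prime m"
  shows "L = K \<or> L = UNIV"
proof -
  obtain s where s: "card L = card K ^ s"
    using card_subspace_over_power[OF K subspace_over_subfield[OF L \<open>K \<subseteq> L\<close>]] by auto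
  obtain t where t: "card (UNIV :: 'a set) = card L ^ t"
    using card_subspace_over_power[OF L] by (force simp: is_subspace_over_def)
  have "card {0, 1 :: 'a} \<le> card K"
    using K by (intro card_mono) (auto intro: subfield_zero subfield_one)
  then have "2 \<le> card K" by simp
  moreover have "card K ^ m = card K ^ (s * t)"
    using card_UNIV s t by (simp add: power_mult)
  ultimately have "m = s * t" by simp
  with \<open>prime m\<close> have "s = 1 \<or> t = 1" using prime_product by blast
  then show ?thesis
  proof
    assume "s = 1"
    then have "K = L" using s \<open>K \<subseteq> L\<close> by (intro card_subset_eq) auto
    then show ?thesis by simp
  next
    assume "t = 1"
    then have "L = UNIV" using t by (intro card_subset_eq) auto
    then show ?thesis by simp
  qed
qed

subsection \<open>Additive maps commuting with a non-scalar\<close>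

definition scalar_stabilizer :: "('a::field \<Rightarrow> 'a) \<Rightarrow> 'a set" where
  "scalar_stabilizer \<psi> = {b. \<forall>x. \<psi> (b * x) = b * \<psi> x}"

lemma subfield_scalar_stabilizer:
  assumes "additive \<psi>"
  shows "is_subfield (scalar_stabilizer \<psi>)"
  unfolding is_subfield_def scalar_stabilizer_def
proof (intro conjI ballI impI; clarsimp)
  show "\<psi> 0 = 0" by (rule additive.zero[OF assms])
  fix a b assume a: "\<forall>x. \<psi> (a * x) = a * \<psi> x" and b: "\<forall>x. \<psi> (b * x) = b * \<psi> x"
  show "\<psi> ((a + b) * x) = (a + b) * \<psi> x" for x
    using a b additive.add[OF assms] by (simp add: distrib_right)
  show "\<psi> (a * b * x) = a * b * \<psi> x" for x
    using a b by (simp add: mult.assoc)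
next
  fix a assume a: "\<forall>x. \<psi> (a * x) = a * \<psi> x"
  show "\<psi> (- (a * x)) = - (a * \<psi> x)" for x
    using a additive.minus[OF assms] by simp
  assume "a \<noteq> 0"
  then show "\<psi> (inverse a * x) = inverse a * \<psi> x" for x
    using a[rule_format, of "inverse a * x"] by (simp add: field_simps)
qed

lemma scaling_if_commutes_outside_subfield:
  fixes K :: "'a::{field,finite} set" and \<psi> :: "'a \<Rightarrow> 'a"
  assumes K: "is_subfield K" and "card (UNIV :: 'a set) = card K ^ m" and "prime m"
    and "additive \<psi>" and K_linear: "\<And>a x. a \<in> K \<Longrightarrow> \<psi> (a * x) = a * \<psi> x"
    and "\<alpha> \<notin> K" and "\<And>x. \<psi> (\<alpha> * x) = \<alpha> * \<psi> x"
  shows "\<psi> x = x * \<psi> 1"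
proof -
  have "K \<subseteq> scalar_stabilizer \<psi>" "\<alpha> \<in> scalar_stabilizer \<psi>"
    using assms unfolding scalar_stabilizer_def by auto
  then have "scalar_stabilizer \<psi> = UNIV"
    using intermediate_subfield_prime_degree[OF K subfield_scalar_stabilizer] assms by blast
  then have "\<psi> (x * 1) = x * \<psi> 1" unfolding scalar_stabilizer_def by blast
  then show ?thesis by simp
qed

subsection \<open>Systematic codes\<close>

definition sys_codeword :: "nat \<Rightarrow> nat \<Rightarrow> (nat \<Rightarrow> nat \<Rightarrow> 'a::field) \<Rightarrow> (nat \<Rightarrow> 'a) \<Rightarrow> 'a list" where
  "sys_codeword n k A u = map (\<lambda>j. \<Sum>i<k. u i * sys_gen_entry k A i j) [0..<n]"

lemma sys_code_eq_range: "sys_code n k A = range (sys_codeword n k A)"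
  unfolding sys_code_def sys_codeword_def by auto

lemma length_sys_codeword [simp]: "length (sys_codeword n k A u) = n"
  by (simp add: sys_codeword_def)

lemma nth_sys_codeword_information:
  "p < k \<Longrightarrow> p < n \<Longrightarrow> sys_codeword n k A u ! p = u p"
  by (simp add: sys_codeword_def sys_gen_entry_def if_distrib[of "\<lambda>a. _ * a"] cong: if_cong)

lemma nth_sys_codeword_redundancy:
  "j < n - k \<Longrightarrow> sys_codeword n k A u ! (k + j) = (\<Sum>i<k. u i * A i j)"
  by (simp add: sys_codeword_def sys_gen_entry_def)

text \<open>
  Scaling the image of the codeword x \<cdot> (row i) gives the image of a codeword whose
  information part is y \<cdot> e_i, by injectivity of \<phi>; its redundancy position k + j then
  reads y \<cdot> A i j.
\<close>
lemma scaled_image_of_row_multiple: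
  fixes \<phi> :: "'a::field \<Rightarrow> 'a"
  assumes "inj \<phi>" "\<phi> 0 = 0" and "i < k" "j < n - k"
    and closed: "map ((*) c) (map \<phi> (sys_codeword n k A (\<lambda>l. if l = i then x else 0)))
      \<in> map \<phi> ` sys_code n k A"
  obtains y where "\<phi> y = c * \<phi> x" "\<phi> (y * A i j) = c * \<phi> (x * A i j)"
proof -
  let ?w = "sys_codeword n k A (\<lambda>l. if l = i then x else 0)"
  obtain u where u: "map ((*) c) (map \<phi> ?w) = map \<phi> (sys_codeword n k A u)"
    using closed by (auto simp: sys_code_eq_range)
  have nth: "c * \<phi> (?w ! p) = \<phi> (sys_codeword n k A u ! p)" if "p < n" for p
    using arg_cong[OF u, of "\<lambda>v. v ! p"] that by simp
  have "i < n" "k < n" "k + j < n" using \<open>i < k\<close> \<open>j < n - k\<close> by auto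
  have u_0: "u l = 0" if "l < k" "l \<noteq> i" for l
  proof -
    have "\<phi> (u l) = \<phi> 0"
      using \<open>\<phi> 0 = 0\<close> nth[of l] that \<open>k < n\<close> by (simp add: nth_sys_codeword_information)
    then show ?thesis using \<open>inj \<phi>\<close> by (simp add: inj_eq)
  qed
  have "\<phi> (u i) = c * \<phi> x"
    using nth[OF \<open>i < n\<close>] \<open>i < k\<close> \<open>i < n\<close> by (simp add: nth_sys_codeword_information)
  moreover have "(\<Sum>l<k. u l * A l j) = u i * A i j"
    using \<open>i < k\<close> u_0 by (subst sum.remove[of _ i]) (auto intro!: sum.neutral)
  then have "\<phi> (u i * A i j) = c * \<phi> (x * A i j)"
    using nth[OF \<open>k + j < n\<close>] \<open>i < k\<close> \<open>j < n - k\<close>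
    by (simp add: nth_sys_codeword_redundancy if_distrib[of "\<lambda>a. a * _"] cong: if_cong)
  ultimately show ?thesis using that by blast
qed

lemma scalar_conjugate_if_linear_on_sys_code:
  fixes K :: "'a::{field,finite} set"
  assumes K: "is_subfield K" and card_UNIV: "card (UNIV :: 'a set) = card K ^ m" and "prime m"
    and ij: "i < k" "j < n - k" "A i j \<notin> K"
    and \<phi>: "Fq_linear_aut K \<phi>" and lin: "linear_on \<phi> n (sys_code n k A)"
  shows "\<exists>d. \<forall>x. \<phi> (d * x) = c * \<phi> x"
proof -
  have "bij \<phi>" and add: "additive \<phi>" and K_linear: "\<And>a x. a \<in> K \<Longrightarrow> \<phi> (a * x) = a * \<phi> x"
    using \<phi> unfolding Fq_linear_aut_def additive_def by auto
  then have "inj \<phi>" "surj \<phi>" by (auto dest: bij_is_inj bij_is_surj)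
  define \<psi> where "\<psi> x = inv \<phi> (c * \<phi> x)" for x
  have \<phi>_\<psi>: "\<phi> (\<psi> x) = c * \<phi> x" for x
    unfolding \<psi>_def using \<open>surj \<phi>\<close> by (simp add: surj_f_inv_f)
  have \<psi>_eqI: "\<phi> y = c * \<phi> x \<Longrightarrow> \<psi> x = y" for x y
    using \<phi>_\<psi> \<open>inj \<phi>\<close> by (metis injD)
  have "additive \<psi>"
    by unfold_locales (rule \<psi>_eqI, simp add: additive.add[OF add] \<phi>_\<psi> distrib_left)
  moreover have "\<psi> (a * x) = a * \<psi> x" if "a \<in> K" for a x
    by (rule \<psi>_eqI) (simp add: K_linear that \<phi>_\<psi>)
  moreover have "\<psi> (A i j * x) = A i j * \<psi> x" for x
  proof -
    have "map ((*) c) (map \<phi> v) \<in> map \<phi> ` sys_code n k A" if "v \<in> sys_code n k A" for v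
      using lin that unfolding linear_on_def code_image_def is_linear_code_def by blast
    then obtain y where "\<phi> y = c * \<phi> x" "\<phi> (y * A i j) = c * \<phi> (x * A i j)"
      using scaled_image_of_row_multiple[OF \<open>inj \<phi>\<close> additive.zero[OF add] ij(1,2)]
      by (metis rangeI sys_code_eq_range)
    then show ?thesis using \<psi>_eqI by (metis mult.commute)
  qed
  ultimately have "\<psi> x = x * \<psi> 1" for x
    using scaling_if_commutes_outside_subfield[OF K card_UNIV \<open>prime m\<close>] ij(3) by blast
  then show ?thesis using \<phi>_\<psi> by (metis mult.commute)
qed

lemma fully_linear_if_scalar_conjugates:
  assumes add: "additive \<phi>" and conj: "\<And>c. \<exists>d. \<forall>x. \<phi> (d * x) = c * \<phi> x"
  shows "fully_linear \<phi>"
  unfolding fully_linear_def linear_on_def code_image_def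
proof (intro allI impI)
  fix n and C :: "'a list set"
  assume C: "is_linear_code n C"
  show "is_linear_code n (map \<phi> ` C)"
    unfolding is_linear_code_def
  proof (intro conjI ballI allI)
    show "map \<phi> ` C \<subseteq> {v. length v = n}" using C unfolding is_linear_code_def by auto
    show "replicate n 0 \<in> map \<phi> ` C"
      using C additive.zero[OF add] unfolding is_linear_code_def
      by (force intro: image_eqI[where x = "replicate n 0"])
  next
    fix a b assume "a \<in> map \<phi> ` C" "b \<in> map \<phi> ` C"
    then obtain u v where uv: "u \<in> C" "v \<in> C" "a = map \<phi> u" "b = map \<phi> v" by auto
    have "map2 (+) a b = map \<phi> (map2 (+) u v)"
      unfolding uv by (simp add: zip_map1 zip_map2 additive.add[OF add] split_def)
    moreover have "map2 (+) u v \<in> C" using C uv unfolding is_linear_code_def by blast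
    ultimately show "map2 (+) a b \<in> map \<phi> ` C" by blast
  next
    fix c a assume "a \<in> map \<phi> ` C"
    then obtain v where v: "v \<in> C" "a = map \<phi> v" by auto
    obtain d where d: "\<And>x. \<phi> (d * x) = c * \<phi> x" using conj by blast
    have "map ((*) c) a = map \<phi> (map ((*) d) v)" unfolding v by (simp add: d)
    moreover have "map ((*) d) v \<in> C" using C v unfolding is_linear_code_def by blast
    ultimately show "map ((*) c) a \<in> map \<phi> ` C" by blast
  qed
qed

theorem mainTheorem6:
  fixes K :: "'a::{field,finite} set"
    and q m n k :: nat
    and A :: "nat \<Rightarrow> nat \<Rightarrow> 'a"
    and \<phi> :: "'a \<Rightarrow> 'a"
  assumes "is_subfield K" and "card K = q" and "card (UNIV :: 'a set) = q ^ m"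
    and "prime m"
    and "0 < k" and "k < n"
    and "\<exists>\<alpha>\<in>entry_set n k A. \<alpha> \<notin> K"
    and "Fq_linear_aut K \<phi>"
    and "linear_on \<phi> n (sys_code n k A)"
  shows "fully_linear \<phi>"
proof (rule fully_linear_if_scalar_conjugates)
  show "additive \<phi>" using \<open>Fq_linear_aut K \<phi>\<close> unfolding Fq_linear_aut_def additive_def by blast
  obtain i j where "i < k" "j < n - k" "A i j \<notin> K"
    using \<open>\<exists>\<alpha>\<in>entry_set n k A. \<alpha> \<notin> K\<close> unfolding entry_set_def by auto
  then show "\<exists>d. \<forall>x. \<phi> (d * x) = c * \<phi> x" for c
    using scalar_conjugate_if_linear_on_sys_code assms by (metis (no_types))
qed

end
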